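(* Let $(\Lambda,\ell)$ be a critical map, $U$ a simply connected region with flat chart $Z:U\to\mathbb{C}$, and $z_0\in\Lambda_0$ a base vertex. For every discrete holomorphic function $f$ on $\Lambda$ in $U$, one has $df=f'\,dZ$, that is, for every edge $(x,y)$ of the diamond $\Diamond$ in $U$, $f(y)-f(x)=\frac{f'(x)+f'(y)}{2}\,(Z(y)-Z(x))$.
   Context: $\Lambda=\Gamma\sqcup\Gamma^*$ is a cellular decomposition and its Poincaré dual; the diamond $\Diamond$ has vertices $\Lambda_0$ and faces the quadrilaterals $(x,y,x',y')$ for each edge $(x,x')\in\Gamma_1$ with dual $(y,y')$; its edges join $x\in\Gamma_0$ to $y\in\Gamma^*_0$. The map is critical: with respect to a flat metric with conic singularities, each face of $\Diamond$ is realized as a Euclidean rhombus of common side length $\delta$, with diagonals the dual edges, orthogonal, forming a direct basis, and $\rho(e)=\ell(e^* )/\ell(e)$. The flat chart $Z$ is an orientation-preserving isometric coordinate on $U$ (no conic singularities inside), giving positions $Z(v)$ of the vertices. $f$ is discrete holomorphic if $f(y')-f(y)=i\rho(x,x')(f(x')-f(x))$ for dual edges $(x,x'),(y,y')$. For a function $g$ on $\Lambda_0$, the 1-form $g\cdot dZ$ on $\Diamond$ is $\int_{(u,v)}g\cdot dZ=\frac{g(u)+g(v)}{2}(Z(v)-Z(u))$. Set $\varepsilon=+1$ on $\Gamma_0$, $-1$ on $\Gamma^*_0$, $f^\dagger:=\varepsilon\bar f$, and $f'(z):=\frac{4}{\delta^2}\bigl(\int_{z_0}^z f^\dagger\,dZ\bigr)^\dagger$,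 where the integral is taken along any path in $\Diamond$ from $z_0$ to $z$ (for holomorphic $f$ it is path independent, and $f^\dagger$, $f'$ are holomorphic). *)

theory Defs
  imports Complex_Main
begin

text \<open>Faces of the diamond in U are quadruples (x, y, x', y') with x, x' primal
  vertices (in the set B = Gamma_0), y, y' dual vertices (not in B), the
  primal edge (x,x') having dual edge (y,y').\<close>

type_synonym 'v face = "'v \<times> 'v \<times> 'v \<times> 'v"

definition face_verts :: "'v face \<Rightarrow> 'v list" where
  "face_verts \<phi> = (case \<phi> of (x, y, x', y') \<Rightarrow> [x, y, x', y'])"

definition diamond_vertices :: "'v face set \<Rightarrow> 'v set" where
  "diamond_vertices F = (\<Union>\<phi>\<in>F. set (face_verts \<phi>))"

definition diamond_edges :: "'v face set \<Rightarrow> ('v \<times> 'v) set" where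
  "diamond_edges F = {(u, v). \<exists>x y x' y'. (x, y, x', y') \<in> F \<and>
      ({u, v} = {x, y} \<or> {u, v} = {y, x'} \<or> {u, v} = {x', y'} \<or> {u, v} = {y', x})}"

definition is_walk :: "('v \<times> 'v) set \<Rightarrow> 'v list \<Rightarrow> bool" where
  "is_walk E w \<longleftrightarrow> w \<noteq> [] \<and> (\<forall>i < length w - 1. (w ! i, w ! Suc i) \<in> E)"

definition face_loops :: "'v face set \<Rightarrow> 'v list set" where
  "face_loops F = {c. \<exists>\<phi>\<in>F. \<exists>k<4.
      (let r = rotate k (face_verts \<phi>) in c = r @ [hd r] \<or> c = rev (r @ [hd r]))}"

inductive walk_move :: "('v \<times> 'v) set \<Rightarrow> 'v list set \<Rightarrow> 'v list \<Rightarrow> 'v list \<Rightarrow> bool"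
  for E L where
  backtrack: "(u, v) \<in> E \<Longrightarrow> walk_move E L (xs @ u # ys) (xs @ u # v # u # ys)"
| face_loop: "c \<in> L \<Longrightarrow> walk_move E L (xs @ hd c # ys) (xs @ c @ ys)"

definition walk_homotopic :: "'v face set \<Rightarrow> 'v list \<Rightarrow> 'v list \<Rightarrow> bool" where
  "walk_homotopic F = (\<lambda>a b. walk_move (diamond_edges F) (face_loops F) a b
                            \<or> walk_move (diamond_edges F) (face_loops F) b a)\<^sup>*\<^sup>*"

definition simply_connected_region :: "'v face set \<Rightarrow> bool" where
  "simply_connected_region F \<longleftrightarrow> F \<noteq> {} \<and>
     (\<forall>u\<in>diamond_vertices F. \<forall>v\<in>diamond_vertices F.
        \<exists>w. is_walk (diamond_edges F) w \<and> hd w = u \<and> last w = v) \<and>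
     (\<forall>w. is_walk (diamond_edges F) w \<and> hd w = last w \<longrightarrow> walk_homotopic F w [hd w])"

text \<open>Criticality in the flat chart: every face is a Euclidean rhombus of side
  delta whose diagonals (x,x') and (y,y') are orthogonal and form a direct basis.\<close>
definition critical_region :: "'v set \<Rightarrow> 'v face set \<Rightarrow> ('v \<Rightarrow> complex) \<Rightarrow> real \<Rightarrow> bool" where
  "critical_region B F Z \<delta> \<longleftrightarrow> \<delta> > 0 \<and>
     (\<forall>(x, y, x', y') \<in> F. x \<in> B \<and> x' \<in> B \<and> y \<notin> B \<and> y' \<notin> B \<and>
        cmod (Z y - Z x) = \<delta> \<and> cmod (Z x' - Z y) = \<delta> \<and>
        cmod (Z y' - Z x') = \<delta> \<and> cmod (Z x - Z y') = \<delta> \<and>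
        Z x' \<noteq> Z x \<and> (\<exists>t>0. Z y' - Z y = \<i> * complex_of_real t * (Z x' - Z x)))"

definition face_rho :: "('v \<Rightarrow> complex) \<Rightarrow> 'v face \<Rightarrow> real" where
  "face_rho Z \<phi> = (case \<phi> of (x, y, x', y') \<Rightarrow> cmod (Z y' - Z y) / cmod (Z x' - Z x))"

definition discrete_holomorphic :: "'v face set \<Rightarrow> ('v \<Rightarrow> complex) \<Rightarrow> ('v \<Rightarrow> complex) \<Rightarrow> bool" where
  "discrete_holomorphic F Z f \<longleftrightarrow>
     (\<forall>(x, y, x', y') \<in> F.
        f y' - f y = \<i> * complex_of_real (face_rho Z (x, y, x', y')) * (f x' - f x))"

definition eps :: "'v set \<Rightarrow> 'v \<Rightarrow> complex" where
  "eps B v = (if v \<in> B then 1 else -1)"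

definition dagger :: "'v set \<Rightarrow> ('v \<Rightarrow> complex) \<Rightarrow> 'v \<Rightarrow> complex" where
  "dagger B f v = eps B v * cnj (f v)"

definition walk_integral :: "('v \<Rightarrow> complex) \<Rightarrow> ('v \<Rightarrow> complex) \<Rightarrow> 'v list \<Rightarrow> complex" where
  "walk_integral Z g w =
     (\<Sum>i < length w - 1. (g (w ! i) + g (w ! Suc i)) / 2 * (Z (w ! Suc i) - Z (w ! i)))"

definition dderiv :: "'v set \<Rightarrow> 'v face set \<Rightarrow> ('v \<Rightarrow> complex) \<Rightarrow> real \<Rightarrow> 'v
                       \<Rightarrow> ('v \<Rightarrow> complex) \<Rightarrow> 'v \<Rightarrow> complex" where
  "dderiv B F Z \<delta> z0 f =
     (\<lambda>z. complex_of_real (4 / \<delta>\<^sup>2) *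
        dagger B (\<lambda>z'. walk_integral Z (dagger B f)
           (SOME w. is_walk (diamond_edges F) w \<and> hd w = z0 \<and> last w = z')) z)"

end

theory Submission
  imports Defs
begin

text \<open>The 1-form \<open>f\<^sup>\<dagger> dZ\<close> is closed: on each rhombus its integral is
  \<open>((g x' - g x)(Z y' - Z y) - (g y' - g y)(Z x' - Z x))/2\<close> with \<open>g = f\<^sup>\<dagger>\<close>, and
  conjugating the discrete Cauchy-Riemann equation, using \<open>\<epsilon> = -1\<close> on dual vertices, shows
  that this vanishes. Since every closed walk in U is a product of backtracks and face loops,
  integrals along walks from \<open>z\<^sub>0\<close> define a primitive G of \<open>f\<^sup>\<dagger> dZ\<close>. Along a diamond edge
  (a,b) the endpoints have opposite type, so \<open>G\<^sup>\<dagger> a + G\<^sup>\<dagger> b = \<epsilon>(a) cnj (G a - G b)\<close>, and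
  conjugating \<open>G b - G a = (g a + g b)/2 (Z b - Z a)\<close> yields
  \<open>(f' a + f' b)/2 (Z b - Z a) = (f b - f a) |Z b - Z a|\<^sup>2 / \<delta>\<^sup>2 = f b - f a\<close>.\<close>

lemma walk_integral_Nil [simp]: "walk_integral Z g [] = 0"
  by (simp add: walk_integral_def)

lemma walk_integral_singleton [simp]: "walk_integral Z g [a] = 0"
  by (simp add: walk_integral_def)

lemma walk_integral_Cons_Cons [simp]:
  "walk_integral Z g (a # b # w) = (g a + g b) / 2 * (Z b - Z a) + walk_integral Z g (b # w)"
proof -
  have "length (a # b # w) - 1 = Suc (length (b # w) - 1)" by simp
  then show ?thesis unfolding walk_integral_def by (simp only: sum.lessThan_Suc_shift) simp
qed

lemma walk_integral_append_Cons:
  "walk_integral Z g (xs @ a # ys) = walk_integral Z g (xs @ [a]) + walk_integral Z g (a # ys)"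
  by (induction xs rule: induct_list012) auto

lemma walk_integral_append:
  assumes "xs \<noteq> []" "ys \<noteq> []"
  shows "walk_integral Z g (xs @ ys) =
    walk_integral Z g xs + walk_integral Z g [last xs, hd ys] + walk_integral Z g ys"
  using assms by (induction xs rule: induct_list012) (auto simp: neq_Nil_conv)

lemma walk_integral_rev: "walk_integral Z g (rev w) = - walk_integral Z g w"
proof (induction w rule: induct_list012)
  case (3 a b w)
  have "walk_integral Z g (rev (a # b # w)) =
      walk_integral Z g (rev (b # w)) + walk_integral Z g [b, a]"
    using walk_integral_append_Cons[of Z g "rev w" b "[a]"] by simp
  with 3 show ?case by (simp add: field_simps)
qed simp_all

lemma walk_integral_backtrack:
  "walk_integral Z g (xs @ u # v # u # ys) = walk_integral Z g (xs @ u # ys)"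
  by (subst (1 2) walk_integral_append_Cons) (simp add: field_simps)

lemma walk_integral_insert_loop:
  assumes "c \<noteq> []" "last c = hd c"
  shows "walk_integral Z g (xs @ c @ ys) = walk_integral Z g (xs @ hd c # ys) + walk_integral Z g c"
proof -
  have split: "walk_integral Z g (us @ vs) = walk_integral Z g (us @ [hd vs]) + walk_integral Z g vs"
    if "vs \<noteq> []" for us vs :: "'a list"
    using that walk_integral_append_Cons[of Z g us "hd vs" "tl vs"] by simp
  have "walk_integral Z g (c @ ys) = walk_integral Z g (butlast c @ last c # ys)"
    using \<open>c \<noteq> []\<close> by (metis append.assoc append_Cons append_Nil append_butlast_last_id)
  also have "\<dots> = walk_integral Z g c + walk_integral Z g (hd c # ys)"
    using walk_integral_append_Cons[of Z g "butlast c" "last c" ys] \<open>c \<noteq> []\<close>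
    by (simp add: assms(2)[symmetric])
  finally have "walk_integral Z g (c @ ys) = walk_integral Z g c + walk_integral Z g (hd c # ys)" .
  then show ?thesis
    using split[of "c @ ys" xs] split[of "hd c # ys" xs] \<open>c \<noteq> []\<close> by simp
qed

lemma walk_integral_quad_loop:
  "walk_integral Z g [a, b, c, d, a] = ((g c - g a) * (Z d - Z b) - (g d - g b) * (Z c - Z a)) / 2"
  by simp algebra

lemma is_walk_Nil [simp]: "\<not> is_walk E []"
  by (simp add: is_walk_def)

lemma is_walk_singleton [simp]: "is_walk E [a]"
  by (simp add: is_walk_def)

lemma is_walk_Cons_Cons [simp]: "is_walk E (a # b # w) \<longleftrightarrow> (a, b) \<in> E \<and> is_walk E (b # w)"
proof -
  have "length (a # b # w) - 1 = Suc (length (b # w) - 1)" by simp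
  then show ?thesis unfolding is_walk_def by (simp only: All_less_Suc2) simp
qed

lemma is_walk_append:
  "is_walk E xs \<Longrightarrow> is_walk E ys \<Longrightarrow> (last xs, hd ys) \<in> E \<Longrightarrow> is_walk E (xs @ ys)"
  by (induction xs rule: induct_list012; cases ys) auto

lemma is_walk_rev: "sym E \<Longrightarrow> is_walk E w \<Longrightarrow> is_walk E (rev w)"
proof (induction w rule: induct_list012)
  case (3 a b w)
  then have "is_walk E (rev (b # w) @ [a])"
    by (intro is_walk_append) (auto simp del: rev.simps simp: last_rev dest: symD)
  then show ?case by simp
qed simp_all

lemma walk_integral_edge_difference:
  assumes closed: "\<And>w. is_walk E w \<Longrightarrow> hd w = last w \<Longrightarrow> walk_integral Z g w = 0"
    and "sym E" "(a, b) \<in> E"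
    and "is_walk E wa" "is_walk E wb" "hd wa = hd wb" "last wa = a" "last wb = b"
  shows "walk_integral Z g wb - walk_integral Z g wa = walk_integral Z g [a, b]"
proof -
  have "wa \<noteq> []" "wb \<noteq> []" using assms(4,5) by auto
  have "is_walk E (wa @ rev wb)"
    using assms \<open>wb \<noteq> []\<close> by (intro is_walk_append is_walk_rev) (auto simp: hd_rev)
  moreover have "hd (wa @ rev wb) = last (wa @ rev wb)"
    using assms(6) \<open>wa \<noteq> []\<close> \<open>wb \<noteq> []\<close> by (simp add: last_rev)
  ultimately have "walk_integral Z g (wa @ rev wb) = 0" by (rule closed)
  moreover have "walk_integral Z g (wa @ rev wb) =
      walk_integral Z g wa + walk_integral Z g [a, b] - walk_integral Z g wb"
    using assms(7,8) \<open>wa \<noteq> []\<close> \<open>wb \<noteq> []\<close>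
    by (simp add: walk_integral_append walk_integral_rev hd_rev del: walk_integral_Cons_Cons)
  ultimately show ?thesis by (simp add: algebra_simps del: walk_integral_Cons_Cons)
qed

lemma walk_move_walk_integral_eq:
  assumes loops: "\<And>c. c \<in> L \<Longrightarrow> c \<noteq> [] \<and> last c = hd c \<and> walk_integral Z g c = 0"
    and "walk_move E L a b"
  shows "walk_integral Z g a = walk_integral Z g b"
  using \<open>walk_move E L a b\<close>
proof cases
  case (backtrack u v xs ys)
  then show ?thesis by (simp add: walk_integral_backtrack)
next
  case (face_loop c xs ys)
  then show ?thesis using loops[of c] walk_integral_insert_loop[of c Z g xs ys] by simp
qed

lemma sym_diamond_edges: "sym (diamond_edges F)"
proof (rule symI)
  fix u v assume "(u, v) \<in> diamond_edges F"
  then show "(v, u) \<in> diamond_edges F"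
    unfolding diamond_edges_def by (simp add: insert_commute)
qed

lemma diamond_edge_vertices:
  "(u, v) \<in> diamond_edges F \<Longrightarrow> u \<in> diamond_vertices F \<and> v \<in> diamond_vertices F"
  unfolding diamond_edges_def diamond_vertices_def face_verts_def
  by (auto simp: doubleton_eq_iff) (metis (mono_tags, lifting) list.set_intros case_prod_conv)+

lemma diamond_edge_rhombus_side:
  assumes "critical_region B F Z \<delta>" and "(u, v) \<in> diamond_edges F"
  shows "cmod (Z v - Z u) = \<delta>" and "u \<in> B \<longleftrightarrow> v \<notin> B"
proof -
  from assms(2) obtain x y x' y' where face: "(x, y, x', y') \<in> F" and
    side: "{u, v} = {x, y} \<or> {u, v} = {y, x'} \<or> {u, v} = {x', y'} \<or> {u, v} = {y', x}"
    unfolding diamond_edges_def by auto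
  from assms(1) face have "x \<in> B \<and> x' \<in> B \<and> y \<notin> B \<and> y' \<notin> B \<and>
      cmod (Z y - Z x) = \<delta> \<and> cmod (Z x' - Z y) = \<delta> \<and>
      cmod (Z y' - Z x') = \<delta> \<and> cmod (Z x - Z y') = \<delta>"
    unfolding critical_region_def by fastforce
  with side show "cmod (Z v - Z u) = \<delta>" and "u \<in> B \<longleftrightarrow> v \<notin> B"
    by (auto simp: doubleton_eq_iff norm_minus_commute)
qed

lemma dagger_face_relation:
  assumes crit: "critical_region B F Z \<delta>" and hol: "discrete_holomorphic F Z f"
    and face: "(x, y, x', y') \<in> F"
  shows "(dagger B f y' - dagger B f y) * (Z x' - Z x) = (dagger B f x' - dagger B f x) * (Z y' - Z y)"
proof -
  from crit face have B: "x \<in> B" "x' \<in> B" "y \<notin> B" "y' \<notin> B" and "Z x' \<noteq> Z x"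
    and "\<exists>t>0. Z y' - Z y = \<i> * complex_of_real t * (Z x' - Z x)"
    unfolding critical_region_def by fastforce+
  then obtain t where t: "t > 0" and dZ: "Z y' - Z y = \<i> * complex_of_real t * (Z x' - Z x)"
    by blast
  have "face_rho Z (x, y, x', y') = t"
    unfolding face_rho_def using t dZ \<open>Z x' \<noteq> Z x\<close> by (simp add: norm_mult)
  with hol face have df: "f y' - f y = \<i> * complex_of_real t * (f x' - f x)"
    unfolding discrete_holomorphic_def by fastforce
  have "dagger B f y' - dagger B f y = - cnj (f y' - f y)"
    using B by (simp add: dagger_def eps_def)
  also have "\<dots> = \<i> * complex_of_real t * (dagger B f x' - dagger B f x)"
    using B by (simp add: df dagger_def eps_def algebra_simps)
  finally show ?thesis by (simp add: dZ mult_ac)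
qed

lemma face_loop_closed: "c \<in> face_loops F \<Longrightarrow> c \<noteq> [] \<and> last c = hd c"
  unfolding face_loops_def
  by (auto simp: Let_def face_verts_def last_rev hd_rev split: prod.splits)

lemma face_loop_walk_integral_zero:
  assumes crit: "critical_region B F Z \<delta>" and hol: "discrete_holomorphic F Z f"
    and c: "c \<in> face_loops F"
  shows "walk_integral Z (dagger B f) c = 0"
proof -
  from c obtain x y x' y' k where face: "(x, y, x', y') \<in> F" and "k < 4"
    and c_cases: "c = rotate k [x, y, x', y'] @ [hd (rotate k [x, y, x', y'])] \<or>
      c = rev (rotate k [x, y, x', y'] @ [hd (rotate k [x, y, x', y'])])"
    unfolding face_loops_def face_verts_def by (auto simp: Let_def)
  define g where "g = dagger B f"
  have relation: "(g y' - g y) * (Z x' - Z x) = (g x' - g x) * (Z y' - Z y)"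
    using dagger_face_relation[OF crit hol face] by (simp add: g_def)
  let ?r = "rotate k [x, y, x', y'] @ [hd (rotate k [x, y, x', y'])]"
  have "k = 0 \<or> k = 1 \<or> k = 2 \<or> k = 3" using \<open>k < 4\<close> by auto
  then have "?r \<in> {[x, y, x', y', x], [y, x', y', x, y], [x', y', x, y, x'], [y', x, y, x', y']}"
    by (elim disjE) (simp_all add: rotate_def numeral_eq_Suc)
  \<comment> \<open>all four starting corners give the same expression, which vanishes by the face relation\<close>
  then have "walk_integral Z g ?r = ((g x' - g x) * (Z y' - Z y) - (g y' - g y) * (Z x' - Z x)) / 2"
    by (elim insertE emptyE) (simp_all only: walk_integral_quad_loop, simp_all add: algebra_simps)
  then have "walk_integral Z g ?r = 0" by (simp add: relation)
  with c_cases show ?thesis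
    using walk_integral_rev[of Z g ?r] by (auto simp: g_def simp del: rev_append)
qed

lemma walk_homotopic_walk_integral_eq:
  assumes crit: "critical_region B F Z \<delta>" and hol: "discrete_holomorphic F Z f"
    and "walk_homotopic F a b"
  shows "walk_integral Z (dagger B f) a = walk_integral Z (dagger B f) b"
proof -
  have move: "walk_integral Z (dagger B f) u = walk_integral Z (dagger B f) v"
    if "walk_move (diamond_edges F) (face_loops F) u v" for u v
    using that face_loop_closed face_loop_walk_integral_zero[OF crit hol]
    by (intro walk_move_walk_integral_eq) auto
  from \<open>walk_homotopic F a b\<close> show ?thesis
    unfolding walk_homotopic_def by induction (auto dest: move)
qed

lemma closed_walk_integral_zero:
  assumes crit: "critical_region B F Z \<delta>" and sc: "simply_connected_region F"
    and hol: "discrete_holomorphic F Z f"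
    and "is_walk (diamond_edges F) w" "hd w = last w"
  shows "walk_integral Z (dagger B f) w = 0"
proof -
  have "walk_homotopic F w [hd w]"
    using sc assms(4,5) unfolding simply_connected_region_def by blast
  then show ?thesis using walk_homotopic_walk_integral_eq[OF crit hol] by fastforce
qed

definition base_walk :: "'v face set \<Rightarrow> 'v \<Rightarrow> 'v \<Rightarrow> 'v list" where
  "base_walk F z0 v = (SOME w. is_walk (diamond_edges F) w \<and> hd w = z0 \<and> last w = v)"

lemma base_walk_connects:
  assumes "simply_connected_region F" "z0 \<in> diamond_vertices F" "v \<in> diamond_vertices F"
  shows "is_walk (diamond_edges F) (base_walk F z0 v) \<and> hd (base_walk F z0 v) = z0
    \<and> last (base_walk F z0 v) = v"
proof -
  from assms obtain w where "is_walk (diamond_edges F) w \<and> hd w = z0 \<and> last w = v"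
    unfolding simply_connected_region_def by blast
  then show ?thesis unfolding base_walk_def by (rule someI)
qed

lemma dderiv_base_walk:
  "dderiv B F Z \<delta> z0 f = (\<lambda>z. complex_of_real (4 / \<delta>\<^sup>2) *
     dagger B (\<lambda>v. walk_integral Z (dagger B f) (base_walk F z0 v)) z)"
  unfolding dderiv_def base_walk_def ..

lemma cnj_eps [simp]: "cnj (eps B a) = eps B a"
  by (simp add: eps_def)

lemma dagger_add_opposite:
  "(a \<in> B \<longleftrightarrow> b \<notin> B) \<Longrightarrow> dagger B h a + dagger B h b = eps B a * cnj (h a - h b)"
  by (auto simp: dagger_def eps_def)

lemma edge_difference_from_dagger_primitive:
  assumes opposite: "a \<in> B \<longleftrightarrow> b \<notin> B" and side: "cmod (Z b - Z a) = \<delta>" and "\<delta> > 0"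
    and primitive: "G b - G a = (dagger B f a + dagger B f b) / 2 * (Z b - Z a)"
  shows "f b - f a = (complex_of_real (4 / \<delta>\<^sup>2) * dagger B G a
                      + complex_of_real (4 / \<delta>\<^sup>2) * dagger B G b) / 2 * (Z b - Z a)"
proof -
  define d where "d = Z b - Z a"
  define e where "e = eps B a"
  define c where "c = complex_of_real (4 / \<delta>\<^sup>2)"
  have ee: "e * (e * z) = z" for z by (simp add: e_def eps_def)
  have "cnj (G a - G b) = - cnj (G b - G a)" by simp
  also have "\<dots> = - (cnj (dagger B f a + dagger B f b) / 2 * cnj d)"
    by (simp only: primitive d_def complex_cnj_mult complex_cnj_divide complex_cnj_numeral)
  also have "cnj (dagger B f a + dagger B f b) = e * (f a - f b)"
    using dagger_add_opposite[OF opposite, of f] by (simp add: e_def)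
  finally have "dagger B G a + dagger B G b = e * - (e * ((f a - f b) / 2 * cnj d))"
    using dagger_add_opposite[OF opposite, of G] by (simp add: e_def)
  then have sum: "dagger B G a + dagger B G b = (f b - f a) / 2 * cnj d"
    by (simp only: mult_minus_right ee)
      (simp only: mult_minus_left[symmetric] minus_divide_left minus_diff_eq)
  have "(c * dagger B G a + c * dagger B G b) / 2 * d = c / 4 * (f b - f a) * (cnj d * d)"
    by (simp only: distrib_left[symmetric] sum) (simp add: field_simps)
  also have "cnj d * d = complex_of_real (\<delta>\<^sup>2)"
    by (metis complex_norm_square mult.commute of_real_power side d_def)
  also have "c / 4 * (f b - f a) * complex_of_real (\<delta>\<^sup>2) = f b - f a"
    using \<open>\<delta> > 0\<close> by (simp add: c_def field_simps flip: of_real_mult)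
  finally show ?thesis by (simp add: c_def d_def)
qed

theorem mainTheorem13:
  fixes B :: "'v set" and F :: "'v face set" and Z f :: "'v \<Rightarrow> complex"
    and \<delta> :: real and z0 :: 'v
  assumes "critical_region B F Z \<delta>"
    and "simply_connected_region F"
    and "z0 \<in> diamond_vertices F"
    and "discrete_holomorphic F Z f"
  shows "\<forall>(x, y) \<in> diamond_edges F.
           f y - f x = (dderiv B F Z \<delta> z0 f x + dderiv B F Z \<delta> z0 f y) / 2 * (Z y - Z x)"
proof (intro ballI, clarify)
  fix a b assume edge: "(a, b) \<in> diamond_edges F"
  define G where "G v = walk_integral Z (dagger B f) (base_walk F z0 v)" for v
  have "G b - G a = walk_integral Z (dagger B f) [a, b]"
    unfolding G_def
    using closed_walk_integral_zero[OF assms(1,2,4)] sym_diamond_edges edge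
      base_walk_connects[OF assms(2,3)] diamond_edge_vertices[OF edge]
    by (intro walk_integral_edge_difference) auto
  then have "G b - G a = (dagger B f a + dagger B f b) / 2 * (Z b - Z a)" by simp
  moreover have "\<delta> > 0" using assms(1) by (simp add: critical_region_def)
  ultimately show "f b - f a = (dderiv B F Z \<delta> z0 f a + dderiv B F Z \<delta> z0 f b) / 2 * (Z b - Z a)"
    unfolding dderiv_base_walk G_def[symmetric]
    using diamond_edge_rhombus_side[OF assms(1) edge] by (intro edge_difference_from_dagger_primitive)
qed

end
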